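(* Let $d\ge 1$ and let $Z_1,\ldots,Z_d$ be independent standard normal random variables. For $q\in\mathbb{R}$ and $l=(l_1,\ldots,l_d)'\in\mathbb{R}^d$ define $H(q;l)=P\big(\sum_{j=1}^d l_j Z_j^2\le q\big)$, where the probability is with respect to $Z_1,\ldots,Z_d$ only. Let $\lambda=(\lambda_1,\ldots,\lambda_d)'$ be a fixed vector with $\lambda_j>0$ for all $j$. Let $(T_n)$ be any sequence of real-valued random variables, and let $(\hat\lambda_n)$ be a sequence of $\mathbb{R}^d$-valued random vectors (defined on the same probability space as the $T_n$) with $\hat\lambda_n\to\lambda$ in probability. Define $p_n=1-H(T_n;\lambda)$ and $\hat p_n=1-H(T_n;\hat\lambda_n)$. Then $\hat p_n-p_n=\|\hat\lambda_n-\lambda\|\,O_P(1)$, i.e. there exist random variables $B_n$ that are bounded in probability such that $|\hat p_n-p_n|\le \|\hat\lambda_n-\lambda\|\,B_n$; consequently $\hat p_n-p_n\to 0$ in probability.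
   Context: No assumption is made on the distribution of $T_n$. $O_P(1)$ denotes a sequence of random variables that is bounded in probability (tight). *)

theory Defs
  imports "HOL-Probability.Probability"
begin

text \<open>Joint law of d independent standard normal variables Z_0,...,Z_(d-1)
  (indices 0..d-1 stand for the paper's 1..d).\<close>
definition std_normal_vec :: "nat \<Rightarrow> (nat \<Rightarrow> real) measure" where
  "std_normal_vec d = PiM {..<d} (\<lambda>_. density lborel std_normal_density)"

definition H :: "nat \<Rightarrow> real \<Rightarrow> (nat \<Rightarrow> real) \<Rightarrow> real" where
  "H d q l = measure (std_normal_vec d)
      {z \<in> space (std_normal_vec d). (\<Sum>j<d. l j * (z j)\<^sup>2) \<le> q}"

definition vdist :: "nat \<Rightarrow> (nat \<Rightarrow> real) \<Rightarrow> (nat \<Rightarrow> real) \<Rightarrow> real" where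
  "vdist d a b = sqrt (\<Sum>j<d. (a j - b j)\<^sup>2)"

definition conv_in_prob :: "'a measure \<Rightarrow> (nat \<Rightarrow> 'a \<Rightarrow> real) \<Rightarrow> real \<Rightarrow> bool" where
  "conv_in_prob M X c \<longleftrightarrow>
     (\<forall>e>0. (\<lambda>n. measure M {\<omega> \<in> space M. \<bar>X n \<omega> - c\<bar> > e}) \<longlonglongrightarrow> 0)"

definition bounded_in_prob :: "'a measure \<Rightarrow> (nat \<Rightarrow> 'a \<Rightarrow> real) \<Rightarrow> bool" where
  "bounded_in_prob M X \<longleftrightarrow>
     (\<forall>e>0. \<exists>K. \<forall>n. measure M {\<omega> \<in> space M. \<bar>X n \<omega>\<bar> > K} < e)"

end

theory Submission
  imports Defs
begin

text \<open>Replacing z by z / t with t \<ge> 1 multiplies the standard normal density on R^d by at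
  most t^d; as the quadratic form is 2-homogeneous, G(q) = H(q; lam) satisfies
  G(s q) \<le> s^d G(q) for s \<ge> 1. If every weight l_j is within the factor 1 \<plusminus> \<epsilon> of lam_j, then,
  H being antitone in the weights, both H(q; l) and H(q; lam) lie between G(q / (1 + \<epsilon>)) and
  G(q / (1 - \<epsilon>)), a gap of order \<epsilon> by the scaling bound. Hence H(q; -) is Lipschitz at lam
  uniformly in q, the constant Lipschitz bound serves as B_n, and the difference of the p-values
  inherits convergence in probability from lamhat_n.\<close>

lemma PiM_density_lborel:
  fixes f :: "real \<Rightarrow> ennreal"
  assumes fin: "finite I" and [measurable]: "f \<in> borel_measurable borel"
    and prob: "prob_space (density lborel f)"
  shows "PiM I (\<lambda>_. density lborel f) = density (PiM I (\<lambda>_. lborel)) (\<lambda>z. \<Prod>i\<in>I. f (z i))"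
proof -
  interpret P: product_sigma_finite "\<lambda>_. density lborel f"
    unfolding product_sigma_finite_def using prob prob_space_imp_sigma_finite by blast
  interpret L: product_sigma_finite "\<lambda>_. lborel :: real measure"
    unfolding product_sigma_finite_def using sigma_finite_lborel by blast
  show ?thesis
  proof (rule P.PiM_eqI[symmetric, OF fin])
    show "sets (density (PiM I (\<lambda>_. lborel)) (\<lambda>z. \<Prod>i\<in>I. f (z i))) = sets (PiM I (\<lambda>_. density lborel f))"
      by (simp only: sets_density) (rule sets_PiM_cong; simp)
  next
    fix A assume "\<And>i. i \<in> I \<Longrightarrow> A i \<in> sets (density lborel f)"
    then have A: "\<And>i. i \<in> I \<Longrightarrow> A i \<in> sets borel" by simp
    have "Pi\<^sub>E I A \<in> sets (PiM I (\<lambda>_. lborel))"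
      using A fin by (intro sets_PiM_I_finite) auto
    then have "emeasure (density (PiM I (\<lambda>_. lborel)) (\<lambda>z. \<Prod>i\<in>I. f (z i))) (Pi\<^sub>E I A)
        = (\<integral>\<^sup>+ z. (\<Prod>i\<in>I. f (z i)) * indicator (Pi\<^sub>E I A) z \<partial>PiM I (\<lambda>_. lborel))"
      by (subst emeasure_density) (auto intro!: borel_measurable_prod_ennreal)
    also have "\<dots> = (\<integral>\<^sup>+ z. (\<Prod>i\<in>I. f (z i) * indicator (A i) (z i)) \<partial>PiM I (\<lambda>_. lborel))"
    proof (rule nn_integral_cong)
      fix z assume "z \<in> space (PiM I (\<lambda>_. lborel :: real measure))"
      then have "indicator (Pi\<^sub>E I A) z = (\<Prod>i\<in>I. indicator (A i) (z i) :: ennreal)"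
        using fin by (auto simp: space_PiM indicator_def PiE_def Pi_def)
      then show "(\<Prod>i\<in>I. f (z i)) * indicator (Pi\<^sub>E I A) z = (\<Prod>i\<in>I. f (z i) * indicator (A i) (z i))"
        by (simp add: prod.distrib)
    qed
    also have "\<dots> = (\<Prod>i\<in>I. \<integral>\<^sup>+ x. f x * indicator (A i) x \<partial>lborel)"
      using A fin by (intro L.product_nn_integral_prod) auto
    also have "\<dots> = (\<Prod>i\<in>I. emeasure (density lborel f) (A i))"
      using A by (intro prod.cong refl) (simp add: emeasure_density)
    finally show "emeasure (density (PiM I (\<lambda>_. lborel)) (\<lambda>z. \<Prod>i\<in>I. f (z i))) (Pi\<^sub>E I A)
        = (\<Prod>i\<in>I. emeasure (density lborel f) (A i))" .
  qed
qed

lemma distr_density_lborel_divide: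
  fixes f :: "real \<Rightarrow> ennreal" and t :: real
  assumes t: "t > 0" and [measurable]: "f \<in> borel_measurable borel"
  shows "distr (density lborel f) borel (\<lambda>x. x / t) = density lborel (\<lambda>x. ennreal t * f (t * x))"
proof (rule measure_eqI)
  fix A assume "A \<in> sets (distr (density lborel f) borel (\<lambda>x. x / t))"
  then have A[measurable]: "A \<in> sets borel" by simp
  have "emeasure (distr (density lborel f) borel (\<lambda>x. x / t)) A
      = (\<integral>\<^sup>+x. f x * indicator A (x / t) \<partial>lborel)"
    using measurable_sets_borel[OF _ A, of "\<lambda>x. x / t"]
    by (subst emeasure_distr, simp, simp, subst emeasure_density)
       (auto intro!: nn_integral_cong simp: indicator_def)
  also have "\<dots> = ennreal t * (\<integral>\<^sup>+x. f (0 + t * x) * indicator A ((0 + t * x) / t) \<partial>lborel)"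
    using t by (subst nn_integral_real_affine[where c = t and t = 0]) auto
  also have "\<dots> = (\<integral>\<^sup>+x. ennreal t * f (t * x) * indicator A x \<partial>lborel)"
    using t by (subst nn_integral_cmult[symmetric]) (auto simp: mult.assoc)
  also have "\<dots> = emeasure (density lborel (\<lambda>x. ennreal t * f (t * x))) A"
    by (simp add: emeasure_density)
  finally show "emeasure (distr (density lborel f) borel (\<lambda>x. x / t)) A
      = emeasure (density lborel (\<lambda>x. ennreal t * f (t * x))) A" .
qed simp

lemma std_normal_density_mult_le:
  fixes t x :: real
  assumes "1 \<le> \<bar>t\<bar>"
  shows "std_normal_density (t * x) \<le> std_normal_density x"
proof -
  have "1 \<le> \<bar>t\<bar>\<^sup>2"
    using assms by (rule one_le_power)
  then have "1 * x\<^sup>2 \<le> t\<^sup>2 * x\<^sup>2"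
    by (intro mult_right_mono) auto
  then show ?thesis
    unfolding std_normal_density_def by (intro mult_left_mono) (auto simp: power_mult_distrib)
qed

lemma prob_space_std_normal_vec: "prob_space (std_normal_vec d)"
  unfolding std_normal_vec_def by (intro prob_space_PiM prob_space_normal_density) simp

lemma sets_std_normal_vec: "sets (std_normal_vec d) = sets (PiM {..<d} (\<lambda>_. lborel))"
  unfolding std_normal_vec_def by (rule sets_PiM_cong) simp_all

lemma std_normal_vec_eq_density:
  "std_normal_vec d
     = density (PiM {..<d} (\<lambda>_. lborel)) (\<lambda>z. \<Prod>i<d. ennreal (std_normal_density (z i)))"
  unfolding std_normal_vec_def
  by (rule PiM_density_lborel) (simp_all add: prob_space_normal_density)

lemma distr_std_normal_vec_divide:
  fixes t :: real
  assumes t: "t > 0"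
  shows "distr (std_normal_vec d) (PiM {..<d} (\<lambda>_. lborel)) (compose {..<d} (\<lambda>x. x / t))
     = density (PiM {..<d} (\<lambda>_. lborel))
         (\<lambda>z. \<Prod>i<d. ennreal t * ennreal (std_normal_density (t * z i)))"
proof -
  define N where "N = density lborel (\<lambda>x. ennreal (std_normal_density x))"
  define Nt where "Nt = density lborel (\<lambda>x. ennreal t * ennreal (std_normal_density (t * x)))"
  have Nt_distr: "Nt = distr N borel (\<lambda>x. x / t)"
    unfolding N_def Nt_def using t by (simp add: distr_density_lborel_divide)
  have prob_N: "prob_space N"
    unfolding N_def by (rule prob_space_normal_density) simp
  then have prob_Nt: "prob_space Nt"
    unfolding Nt_distr by (rule prob_space.prob_space_distr) (simp add: N_def)
  have "measurable N Nt = measurable borel borel"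
    by (rule measurable_cong_sets) (simp_all add: N_def Nt_def)
  then have divide_measurable: "(\<lambda>x. x / t) \<in> measurable N Nt"
    by simp
  have "distr (std_normal_vec d) (PiM {..<d} (\<lambda>_. lborel)) (compose {..<d} (\<lambda>x. x / t))
      = distr (PiM {..<d} (\<lambda>_. N)) (PiM {..<d} (\<lambda>_. Nt)) (compose {..<d} (\<lambda>x. x / t))"
    unfolding std_normal_vec_def N_def
    by (intro distr_cong refl sets_PiM_cong) (simp_all add: Nt_def)
  also have "\<dots> = PiM {..<d} (\<lambda>_. distr N Nt (\<lambda>x. x / t))"
    using prob_N prob_Nt divide_measurable by (intro distr_PiM_finite_prob_space') simp_all
  also have "\<dots> = PiM {..<d} (\<lambda>_. Nt)"
    unfolding Nt_distr by (intro PiM_cong refl distr_cong) (simp_all add: Nt_def)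
  also have "\<dots> = density (PiM {..<d} (\<lambda>_. lborel))
         (\<lambda>z. \<Prod>i<d. ennreal t * ennreal (std_normal_density (t * z i)))"
    unfolding Nt_def by (rule PiM_density_lborel) (use prob_Nt Nt_def in simp_all)
  finally show ?thesis .
qed

lemma emeasure_std_normal_vec_divide_le:
  fixes t :: real
  assumes t: "1 \<le> t" and A: "A \<in> sets (std_normal_vec d)"
  shows "emeasure (std_normal_vec d) (compose {..<d} (\<lambda>x. x / t) -` A \<inter> space (std_normal_vec d))
    \<le> ennreal (t ^ d) * emeasure (std_normal_vec d) A"
proof -
  have A': "A \<in> sets (PiM {..<d} (\<lambda>_. lborel))"
    using A by (simp add: sets_std_normal_vec)
  have "compose {..<d} (\<lambda>x. x / t) \<in> measurable (PiM {..<d} (\<lambda>_. lborel)) (PiM {..<d} (\<lambda>_. lborel))"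
    unfolding compose_def by measurable
  then have g: "compose {..<d} (\<lambda>x. x / t) \<in> measurable (std_normal_vec d) (PiM {..<d} (\<lambda>_. lborel))"
    by (simp add: measurable_cong_sets[OF sets_std_normal_vec refl])
  have density_le: "(\<Prod>i<d. ennreal t * ennreal (std_normal_density (t * z i)))
      \<le> ennreal (t ^ d) * (\<Prod>i<d. ennreal (std_normal_density (z i)))" for z
  proof -
    have "(\<Prod>i<d. ennreal (std_normal_density (t * z i))) \<le> (\<Prod>i<d. ennreal (std_normal_density (z i)))"
      using t
      by (simp add: prod_ennreal ennreal_leI prod_mono std_normal_density_mult_le)
    then show ?thesis
      using t by (simp add: prod.distrib ennreal_power mult_left_mono)
  qed
  have "emeasure (std_normal_vec d) (compose {..<d} (\<lambda>x. x / t) -` A \<inter> space (std_normal_vec d))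
      = emeasure (distr (std_normal_vec d) (PiM {..<d} (\<lambda>_. lborel)) (compose {..<d} (\<lambda>x. x / t))) A"
    using g A' by (simp add: emeasure_distr)
  also have "\<dots> = (\<integral>\<^sup>+z. (\<Prod>i<d. ennreal t * ennreal (std_normal_density (t * z i))) * indicator A z
      \<partial>PiM {..<d} (\<lambda>_. lborel))"
    using t A' by (simp add: distr_std_normal_vec_divide emeasure_density)
  also have "\<dots> \<le> (\<integral>\<^sup>+z. ennreal (t ^ d) * ((\<Prod>i<d. ennreal (std_normal_density (z i))) * indicator A z)
      \<partial>PiM {..<d} (\<lambda>_. lborel))"
    using density_le by (intro nn_integral_mono) (simp add: mult.assoc[symmetric] mult_right_mono)
  also have "\<dots> = ennreal (t ^ d) * emeasure (std_normal_vec d) A"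
    using A' by (simp add: nn_integral_cmult std_normal_vec_eq_density emeasure_density)
  finally show ?thesis .
qed

definition quad_form :: "nat \<Rightarrow> (nat \<Rightarrow> real) \<Rightarrow> (nat \<Rightarrow> real) \<Rightarrow> real" where
  "quad_form d l z = (\<Sum>j<d. l j * (z j)\<^sup>2)"

lemma H_eq_quad_form:
  "H d q l = measure (std_normal_vec d) {z \<in> space (std_normal_vec d). quad_form d l z \<le> q}"
  by (simp add: H_def quad_form_def)

lemma quad_form_measurable [measurable]:
  "quad_form d l \<in> borel_measurable (std_normal_vec d)"
  unfolding quad_form_def measurable_cong_sets[OF sets_std_normal_vec refl] by measurable

lemma quad_form_divide:
  "quad_form d l (compose {..<d} (\<lambda>x. x / t) z) = quad_form d l z / t\<^sup>2"
  by (simp add: quad_form_def compose_def sum_divide_distrib power_divide)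

lemma H_nonneg: "0 \<le> H d q l"
  by (simp add: H_def)

lemma H_le_1: "H d q l \<le> 1"
proof -
  interpret prob_space "std_normal_vec d" by (rule prob_space_std_normal_vec)
  show ?thesis by (simp add: H_def)
qed

lemma H_mult_le:
  assumes s: "1 \<le> s"
  shows "H d (s * q) l \<le> s ^ d * H d q l"
proof -
  interpret prob_space "std_normal_vec d" by (rule prob_space_std_normal_vec)
  define t where "t = sqrt s"
  have t: "1 \<le> t" "t\<^sup>2 = s"
    using s by (auto simp: t_def real_le_rsqrt)
  have "t \<le> t\<^sup>2"
    using t(1) by (simp add: power2_eq_square mult_le_cancel_left1)
  then have "t \<le> s"
    using t(2) by simp
  define A where "A = {z \<in> space (std_normal_vec d). quad_form d l z \<le> q}"
  have A: "A \<in> sets (std_normal_vec d)"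
    unfolding A_def by measurable
  have "{z \<in> space (std_normal_vec d). quad_form d l z \<le> s * q}
      = compose {..<d} (\<lambda>x. x / t) -` A \<inter> space (std_normal_vec d)"
  proof -
    have "quad_form d l z / t\<^sup>2 \<le> q \<longleftrightarrow> quad_form d l z \<le> s * q" for z
      using t s by (simp add: pos_divide_le_eq mult.commute)
    moreover have "compose {..<d} (\<lambda>x. x / t) z \<in> space (std_normal_vec d)" for z
      by (simp add: std_normal_vec_def space_PiM compose_def)
    ultimately show ?thesis
      by (auto simp: A_def quad_form_divide)
  qed
  then have "ennreal (H d (s * q) l) \<le> ennreal (t ^ d) * ennreal (H d q l)"
    using emeasure_std_normal_vec_divide_le[OF t(1) A]
    by (simp add: H_eq_quad_form A_def emeasure_eq_measure)
  then have "H d (s * q) l \<le> t ^ d * H d q l"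
    using t by (simp add: ennreal_mult[symmetric] H_nonneg ennreal_le_iff)
  also have "\<dots> \<le> s ^ d * H d q l"
    using t \<open>t \<le> s\<close> by (intro mult_right_mono power_mono H_nonneg) auto
  finally show ?thesis .
qed

lemma H_cmult:
  assumes "0 < c"
  shows "H d q (\<lambda>j. c * l j) = H d (q / c) l"
proof -
  have "quad_form d (\<lambda>j. c * l j) z \<le> q \<longleftrightarrow> quad_form d l z \<le> q / c" for z
    using assms by (simp add: quad_form_def mult.assoc flip: sum_distrib_left)
      (simp add: le_divide_eq mult.commute)
  then show ?thesis
    by (simp add: H_eq_quad_form)
qed

lemma H_antimono:
  assumes "\<And>j. j < d \<Longrightarrow> l j \<le> l' j"
  shows "H d q l' \<le> H d q l"
proof -
  interpret prob_space "std_normal_vec d" by (rule prob_space_std_normal_vec)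
  have "quad_form d l z \<le> quad_form d l' z" for z
    unfolding quad_form_def using assms by (intro sum_mono mult_right_mono) auto
  then show ?thesis
    unfolding H_eq_quad_form by (intro finite_measure_mono) (auto intro: order_trans)
qed

lemma power_minus_one_le:
  fixes x c :: real
  assumes "1 \<le> x" "x \<le> c"
  shows "x ^ n - 1 \<le> real n * c ^ n * (x - 1)"
proof (induction n)
  case (Suc n)
  have "1 \<le> c" "0 \<le> x ^ n - 1"
    using assms by (auto simp: one_le_power)
  have "x ^ Suc n - 1 = x * (x ^ n - 1) + (x - 1)"
    by (simp add: algebra_simps)
  also have "\<dots> \<le> c * (real n * c ^ n * (x - 1)) + 1 * (x - 1)"
    using assms Suc.IH \<open>0 \<le> x ^ n - 1\<close>
    by (intro add_mono mult_mono) auto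
  also have "\<dots> \<le> c * (real n * c ^ n * (x - 1)) + c ^ Suc n * (x - 1)"
    using assms \<open>1 \<le> c\<close> by (intro add_left_mono mult_right_mono one_le_power) auto
  also have "\<dots> = real (Suc n) * c ^ Suc n * (x - 1)"
    by (simp add: algebra_simps)
  finally show ?case .
qed simp

lemma H_diff_le_relative:
  fixes \<epsilon> :: real
  assumes \<epsilon>: "0 \<le> \<epsilon>" "\<epsilon> \<le> 1 / 2"
    and close: "\<And>j. j < d \<Longrightarrow> \<bar>l j - lam j\<bar> \<le> \<epsilon> * lam j"
  shows "\<bar>H d q l - H d q lam\<bar> \<le> 4 * real d * 3 ^ d * \<epsilon>"
proof -
  define r where "r = (1 + \<epsilon>) / (1 - \<epsilon>)"
  have r: "1 \<le> r" "r \<le> 3"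
    using \<epsilon> by (simp_all add: r_def le_divide_eq divide_le_eq)
  have "r - 1 = 2 * \<epsilon> / (1 - \<epsilon>)"
    using \<epsilon> by (simp add: r_def field_simps)
  also have "\<dots> \<le> 4 * \<epsilon>"
  proof -
    have "0 \<le> \<epsilon> * (1 - 2 * \<epsilon>)"
      using \<epsilon> by simp
    then show ?thesis
      using \<epsilon> by (simp add: pos_divide_le_eq algebra_simps)
  qed
  finally have r_minus_1: "r - 1 \<le> 4 * \<epsilon>" .
  have weights: "(1 - \<epsilon>) * lam j \<le> l j" "l j \<le> (1 + \<epsilon>) * lam j"
    "(1 - \<epsilon>) * lam j \<le> lam j" "lam j \<le> (1 + \<epsilon>) * lam j" if "j < d" for j
    using close[OF that] by (auto simp: algebra_simps abs_le_iff)
  define lower where "lower = H d q (\<lambda>j. (1 + \<epsilon>) * lam j)"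
  define upper where "upper = H d q (\<lambda>j. (1 - \<epsilon>) * lam j)"
  have bounds: "lower \<le> H d q l" "H d q l \<le> upper" "lower \<le> H d q lam" "H d q lam \<le> upper"
    unfolding lower_def upper_def
    by (rule H_antimono, erule weights)+
  have lower_eq: "lower = H d (q / (1 + \<epsilon>)) lam"
    using \<epsilon> by (simp add: lower_def H_cmult)
  have upper_eq: "upper = H d (r * (q / (1 + \<epsilon>))) lam"
    using \<epsilon> by (simp add: upper_def r_def H_cmult)
  have "upper \<le> r ^ d * lower"
    unfolding lower_eq upper_eq by (rule H_mult_le[OF r(1)])
  then have "\<bar>H d q l - H d q lam\<bar> \<le> (r ^ d - 1) * lower"
    using bounds by (simp add: algebra_simps abs_le_iff)
  also have "\<dots> \<le> r ^ d - 1"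
    using r by (intro mult_left_le) (auto simp: lower_def H_nonneg H_le_1 one_le_power)
  also have "\<dots> \<le> real d * 3 ^ d * (r - 1)"
    using r by (rule power_minus_one_le)
  also have "\<dots> \<le> real d * 3 ^ d * (4 * \<epsilon>)"
    using r_minus_1 by (intro mult_left_mono) auto
  finally show ?thesis
    by (simp add: algebra_simps)
qed

lemma vdist_nonneg: "0 \<le> vdist d l lam"
  by (simp add: vdist_def sum_nonneg)

lemma abs_component_le_vdist:
  assumes "j < d"
  shows "\<bar>l j - lam j\<bar> \<le> vdist d l lam"
proof -
  have "(l j - lam j)\<^sup>2 \<le> (\<Sum>i<d. (l i - lam i)\<^sup>2)"
    using assms by (intro member_le_sum) auto
  then show ?thesis
    unfolding vdist_def by (metis real_sqrt_abs real_sqrt_le_mono)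
qed

lemma H_lipschitz:
  assumes "d \<ge> 1" and lam: "\<And>j. j < d \<Longrightarrow> lam j > 0"
  obtains K where "K > 0" "\<And>q l. \<bar>H d q l - H d q lam\<bar> \<le> K * vdist d l lam"
proof
  define m where "m = Min (lam ` {..<d})"
  have m: "0 < m" "\<And>j. j < d \<Longrightarrow> m \<le> lam j"
    using assms by (auto simp: m_def Min_gr_iff lessThan_empty_iff)
  define K where "K = max (4 * real d * 3 ^ d / m) (2 / m)"
  show "K > 0"
    using m by (simp add: K_def less_max_iff_disj)
  fix q l
  show "\<bar>H d q l - H d q lam\<bar> \<le> K * vdist d l lam"
  proof (cases "vdist d l lam \<le> m / 2")
    case True
    define \<epsilon> where "\<epsilon> = vdist d l lam / m"
    have "\<bar>l j - lam j\<bar> \<le> \<epsilon> * lam j" if "j < d" for j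
    proof -
      have "\<bar>l j - lam j\<bar> \<le> \<epsilon> * m"
        using abs_component_le_vdist[OF that] m by (simp add: \<epsilon>_def)
      also have "\<dots> \<le> \<epsilon> * lam j"
        using m that by (intro mult_left_mono) (auto simp: \<epsilon>_def vdist_nonneg)
      finally show ?thesis .
    qed
    moreover have "0 \<le> \<epsilon>" "\<epsilon> \<le> 1 / 2"
      using True m by (auto simp: \<epsilon>_def vdist_nonneg field_simps)
    ultimately have "\<bar>H d q l - H d q lam\<bar> \<le> 4 * real d * 3 ^ d * \<epsilon>"
      by (intro H_diff_le_relative)
    also have "\<dots> = 4 * real d * 3 ^ d / m * vdist d l lam"
      by (simp add: \<epsilon>_def)
    also have "\<dots> \<le> K * vdist d l lam"
      by (intro mult_right_mono) (auto simp: K_def vdist_nonneg)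
    finally show ?thesis .
  next
    case False
    have "\<bar>H d q l - H d q lam\<bar> \<le> 1"
      using H_nonneg H_le_1 by (smt (verit))
    also have "\<dots> \<le> 2 / m * vdist d l lam"
      using False m by (simp add: field_simps)
    also have "\<dots> \<le> K * vdist d l lam"
      by (intro mult_right_mono) (auto simp: K_def vdist_nonneg)
    finally show ?thesis .
  qed
qed

lemma vdist_measurable:
  assumes [measurable]: "\<And>j. j < d \<Longrightarrow> (\<lambda>\<omega>. X \<omega> j) \<in> borel_measurable M"
  shows "(\<lambda>\<omega>. vdist d (X \<omega>) lam) \<in> borel_measurable M"
  unfolding vdist_def by measurable

lemma bounded_in_prob_const: "bounded_in_prob M (\<lambda>n \<omega>. c)"
  unfolding bounded_in_prob_def by (intro allI impI exI[of _ "\<bar>c\<bar>"]) simp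

lemma conv_in_prob_zero_dominated:
  assumes "prob_space M" and "K > 0"
    and [measurable]: "\<And>n. X n \<in> borel_measurable M"
    and dominated: "\<And>n \<omega>. \<omega> \<in> space M \<Longrightarrow> \<bar>Y n \<omega>\<bar> \<le> K * X n \<omega>"
    and "conv_in_prob M X 0"
  shows "conv_in_prob M Y 0"
  unfolding conv_in_prob_def
proof (intro allI impI)
  interpret prob_space M by fact
  fix e :: real assume "e > 0"
  have X_lim: "(\<lambda>n. measure M {\<omega> \<in> space M. \<bar>X n \<omega> - 0\<bar> > e / K}) \<longlonglongrightarrow> 0"
    using assms \<open>e > 0\<close> by (simp add: conv_in_prob_def)
  have le: "measure M {\<omega> \<in> space M. \<bar>Y n \<omega> - 0\<bar> > e}
      \<le> measure M {\<omega> \<in> space M. \<bar>X n \<omega> - 0\<bar> > e / K}" for n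
  proof (cases "{\<omega> \<in> space M. \<bar>Y n \<omega> - 0\<bar> > e} \<in> sets M")
    case True
    have "e / K < \<bar>X n \<omega>\<bar>" if "\<omega> \<in> space M" "e < \<bar>Y n \<omega>\<bar>" for \<omega>
    proof -
      have "K * X n \<omega> \<le> K * \<bar>X n \<omega>\<bar>"
        using \<open>K > 0\<close> by (intro mult_left_mono) auto
      then have "e < K * \<bar>X n \<omega>\<bar>"
        using dominated[OF that(1), of n] that(2) by linarith
      then show ?thesis
        using \<open>K > 0\<close> by (simp add: pos_divide_less_eq mult.commute)
    qed
    then have "{\<omega> \<in> space M. \<bar>Y n \<omega> - 0\<bar> > e} \<subseteq> {\<omega> \<in> space M. \<bar>X n \<omega> - 0\<bar> > e / K}"
      by auto
    then show ?thesis
      using True by (intro finite_measure_mono) auto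
  qed (simp add: measure_notin_sets)
  show "(\<lambda>n. measure M {\<omega> \<in> space M. \<bar>Y n \<omega> - 0\<bar> > e}) \<longlonglongrightarrow> 0"
    by (rule tendsto_sandwich[OF always_eventually always_eventually tendsto_const X_lim])
      (use le in auto)
qed

theorem theorem1:
  fixes M :: "'a measure" and d :: nat
    and T :: "nat \<Rightarrow> 'a \<Rightarrow> real"
    and lam :: "nat \<Rightarrow> real"
    and lamhat :: "nat \<Rightarrow> 'a \<Rightarrow> (nat \<Rightarrow> real)"
  assumes "prob_space M"
    and "d \<ge> 1"
    and "\<And>j. j < d \<Longrightarrow> lam j > 0"
    and "\<And>n. T n \<in> borel_measurable M"
    and "\<And>n j. j < d \<Longrightarrow> (\<lambda>\<omega>. lamhat n \<omega> j) \<in> borel_measurable M"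
    and "conv_in_prob M (\<lambda>n \<omega>. vdist d (lamhat n \<omega>) lam) 0"
  shows "\<exists>B :: nat \<Rightarrow> 'a \<Rightarrow> real.
           (\<forall>n. B n \<in> borel_measurable M) \<and> bounded_in_prob M B \<and>
           (\<forall>n. \<forall>\<omega>\<in>space M.
              \<bar>(1 - H d (T n \<omega>) (lamhat n \<omega>)) - (1 - H d (T n \<omega>) lam)\<bar>
                \<le> vdist d (lamhat n \<omega>) lam * B n \<omega>) \<and>
           conv_in_prob M (\<lambda>n \<omega>. (1 - H d (T n \<omega>) (lamhat n \<omega>)) - (1 - H d (T n \<omega>) lam)) 0"
proof -
  obtain K where "K > 0" and lipschitz: "\<And>q l. \<bar>H d q l - H d q lam\<bar> \<le> K * vdist d l lam"
    using H_lipschitz assms(2,3) by blast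
  have bound: "\<bar>(1 - H d q l) - (1 - H d q lam)\<bar> \<le> vdist d l lam * K" for q l
    using lipschitz[of q l] by (simp add: abs_minus_commute mult.commute)
  have "(\<lambda>\<omega>. vdist d (lamhat n \<omega>) lam) \<in> borel_measurable M" for n
    using assms(5) by (rule vdist_measurable)
  from conv_in_prob_zero_dominated[OF assms(1) \<open>K > 0\<close> this _ assms(6)]
  have "conv_in_prob M (\<lambda>n \<omega>. (1 - H d (T n \<omega>) (lamhat n \<omega>)) - (1 - H d (T n \<omega>) lam)) 0"
    using bound by (simp add: mult.commute)
  then show ?thesis
    using bound bounded_in_prob_const by (intro exI[of _ "\<lambda>n \<omega>. K"]) simp

qed

end
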